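(* Let $\alpha_1,\alpha_2>0$ satisfy $\alpha_1-\alpha_2\ge e(e-1)$. Let $p$ be analytic in $\mathbb{D}$ with $p(0)=1$. If $$1+\alpha_1 zp'(z)+\alpha_2 z^2p''(z)\prec e^z,$$ then $p(z)\prec e^z$.
   Context: $\mathbb{D}$ is the open unit disk. For $g,h$ analytic in $\mathbb{D}$, $g\prec h$ means there is an analytic $w:\mathbb{D}\to\mathbb{D}$ with $w(0)=0$ and $g=h\circ w$. *)

theory Defs
  imports "HOL-Complex_Analysis.Complex_Analysis"
begin

definition subordinate :: "(complex \<Rightarrow> complex) \<Rightarrow> (complex \<Rightarrow> complex) \<Rightarrow> bool"
  (infix "\<prec>\<^sub>D" 50) where
  "g \<prec>\<^sub>D h \<longleftrightarrow>
     (\<exists>w. w analytic_on ball 0 1 \<and> w ` ball 0 1 \<subseteq> ball 0 1 \<and> w 0 = 0 \<and>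
          (\<forall>z\<in>ball 0 1. g z = h (w z)))"

end

theory Submission
  imports Defs
begin

text \<open>By Schwarz's lemma the subordination hypothesis gives
  \<open>|z (\<alpha>\<^sub>1 p' + \<alpha>\<^sub>2 z p'')| = |e\<^sup>w - 1| \<le> (e - 1)|z|\<close>.
  At a point \<open>z\<^sub>0\<close> where \<open>|p'|\<close> is maximal on a circle, \<open>|p'|\<close> cannot increase radially,
  so \<open>Re (conj p'(z\<^sub>0) \<cdot> z\<^sub>0 p''(z\<^sub>0)) \<ge> 0\<close>; hence the \<open>\<alpha>\<^sub>2\<close>-term cannot cancel the
  \<open>\<alpha>\<^sub>1\<close>-term and \<open>\<alpha>\<^sub>1 |p'| \<le> e - 1\<close>. As \<open>\<alpha>\<^sub>1 \<ge> 2(e - 1)\<close>, this gives \<open>|p - 1| < 1/2\<close>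
  on the disk, and then \<open>w = Ln \<circ> p\<close> is a Schwarz function with \<open>p = exp \<circ> w\<close>.\<close>

lemma norm_exp_minus_one_le:
  fixes u :: complex
  assumes "norm u \<le> 1"
  shows "norm (exp u - 1) \<le> (exp 1 - 1) * norm u"
proof -
  have sums_u: "(\<lambda>n. u ^ Suc n /\<^sub>R fact (Suc n)) sums (exp u - 1)"
    using exp_converges[of u] sums_Suc_iff[of "\<lambda>n. u ^ n /\<^sub>R fact n" "exp u - 1"] by simp
  have sums_1: "(\<lambda>n. 1 / fact (Suc n) :: real) sums (exp 1 - 1)"
    using exp_converges[of "1::real"] sums_Suc_iff[of "\<lambda>n. (1::real) ^ n /\<^sub>R fact n" "exp 1 - 1"]
    by (simp add: divide_inverse)
  have sums_bound: "(\<lambda>n. norm u * (1 / fact (Suc n) :: real)) sums (norm u * (exp 1 - 1))"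
    by (rule sums_mult[OF sums_1])
  have termwise: "norm (u ^ Suc n /\<^sub>R fact (Suc n)) \<le> norm u * (1 / fact (Suc n))" for n
  proof -
    have "norm u ^ n \<le> 1" using assms by (simp add: power_le_one)
    then have "norm u ^ Suc n \<le> norm u" by (simp add: mult_left_le)
    then have "norm u ^ Suc n / fact (Suc n) \<le> norm u / fact (Suc n)"
      by (simp add: divide_right_mono del: power_Suc)
    then show ?thesis by (simp add: norm_power divide_inverse mult.commute del: power_Suc fact_Suc)
  qed
  have "norm (exp u - 1) = norm (\<Sum>n. u ^ Suc n /\<^sub>R fact (Suc n))"
    using sums_u sums_unique by metis
  also have "\<dots> \<le> (\<Sum>n. norm u * (1 / fact (Suc n) :: real))"
    by (rule norm_suminf_le[OF termwise]) (use sums_bound in \<open>simp add: sums_summable\<close>)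
  also have "\<dots> = (exp 1 - 1) * norm u"
    using sums_bound sums_unique by (metis mult.commute)
  finally show ?thesis .
qed

lemma norm_minus_one_le_if_subordinate_exp:
  assumes "g \<prec>\<^sub>D exp" and "norm z < 1"
  shows "norm (g z - 1) \<le> (exp 1 - 1) * norm z"
proof -
  obtain w where w_an: "w analytic_on ball 0 1" and w_maps: "w ` ball 0 1 \<subseteq> ball 0 1"
    and w0: "w 0 = 0" and g_eq: "\<And>z. z \<in> ball 0 1 \<Longrightarrow> g z = exp (w z)"
    using assms(1) unfolding subordinate_def by blast
  have w_le: "norm (w z) \<le> norm z"
    by (rule Schwarz_Lemma(1)[OF analytic_imp_holomorphic[OF w_an] w0 _ assms(2)])
       (use w_maps in force)
  have "norm (g z - 1) \<le> (exp 1 - 1) * norm (w z)"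
    using g_eq[of z] assms(2) w_le norm_exp_minus_one_le[of "w z"] by simp
  also have "\<dots> \<le> (exp 1 - 1) * norm z"
    using w_le by (intro mult_left_mono) auto
  finally show ?thesis .
qed

text \<open>Differentiating \<open>t \<mapsto> |f(t z)|\<^sup>2\<close> at \<open>t = 1\<close>, where it is maximal on \<open>[0, 1]\<close>.\<close>

lemma Re_cnj_mult_radial_deriv_nonneg:
  fixes f :: "complex \<Rightarrow> complex"
  assumes f_diff: "f field_differentiable at z"
    and radial_max: "\<And>t. 0 \<le> t \<Longrightarrow> t \<le> 1 \<Longrightarrow> norm (f (of_real t * z)) \<le> norm (f z)"
  shows "Re (cnj (f z) * (z * deriv f z)) \<ge> 0"
proof (rule ccontr)
  assume neg: "\<not> ?thesis"
  have "((\<lambda>s. f (s * z)) has_field_derivative z * deriv f z) (at (of_real 1))"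
  proof -
    have scale: "((\<lambda>s. s * z) has_field_derivative z) (at 1)"
      using DERIV_cmult_right[OF DERIV_ident, of z] by simp
    have "(f has_field_derivative deriv f z) (at (1 * z))"
      using field_differentiable_derivI[OF f_diff] by simp
    from DERIV_chain2[OF this scale] show ?thesis
      by (simp add: mult.commute)
  qed
  from has_vector_derivative_real_field[OF this]
  have "((\<lambda>t. f (of_real t * z)) has_vector_derivative z * deriv f z) (at 1)"
    by simp
  then have "((\<lambda>t. f (of_real t * z)) has_derivative (\<lambda>h. h *\<^sub>R (z * deriv f z))) (at 1)"
    by (simp add: has_vector_derivative_def)
  from has_derivative_inner[OF this this]
  have D: "((\<lambda>t. inner (f (of_real t * z)) (f (of_real t * z))) has_real_derivative
              2 * inner (f z) (z * deriv f z)) (at 1)"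
    unfolding has_field_derivative_def
    by (simp add: algebra_simps inner_commute mult_commute_abs)
  have "2 * inner (f z) (z * deriv f z) < 0"
    using neg by (simp add: inner_complex_def)
  from DERIV_neg_dec_left[OF D this] obtain e :: real where "e > 0" and decreasing:
    "\<And>h. h > 0 \<Longrightarrow> h < e \<Longrightarrow>
       inner (f (of_real 1 * z)) (f (of_real 1 * z)) < inner (f (of_real (1 - h) * z)) (f (of_real (1 - h) * z))"
    by blast
  define h where "h = min (e / 2) 1"
  have h: "h > 0" "h < e" "h \<le> 1" using \<open>e > 0\<close> by (auto simp: h_def)
  have "norm (f (of_real (1 - h) * z)) \<le> norm (f z)"
    using radial_max[of "1 - h"] h by simp
  then have "inner (f (of_real (1 - h) * z)) (f (of_real (1 - h) * z)) \<le> inner (f z) (f z)"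
    by (simp add: power2_norm_eq_inner[symmetric] power_mono)
  with decreasing[OF h(1,2)] show False by simp
qed

lemma exists_radial_max_modulus:
  fixes f :: "complex \<Rightarrow> complex"
  assumes holo: "f holomorphic_on ball 0 1" and "norm z < 1"
  obtains z0 where "z0 \<noteq> 0" "norm z0 < 1" "norm (f z) \<le> norm (f z0)"
    "\<And>t. 0 \<le> t \<Longrightarrow> t \<le> 1 \<Longrightarrow> norm (f (of_real t * z0)) \<le> norm (f z0)"
proof -
  define r where "r = max (norm z) (1/2)"
  have r: "0 < r" "r < 1" "norm z \<le> r" using assms(2) by (auto simp: r_def)
  have "cball 0 r \<subseteq> ball 0 1" using r by auto
  then have cont: "continuous_on (cball 0 r) f"
    using holomorphic_on_imp_continuous_on[OF holomorphic_on_subset[OF holo]] by blast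
  obtain z0 where z0: "z0 \<in> sphere 0 r" and z0_max: "\<And>y. y \<in> sphere 0 r \<Longrightarrow> norm (f y) \<le> norm (f z0)"
    using continuous_attains_sup[of "sphere 0 r" "\<lambda>y. norm (f y)"] r
      continuous_on_norm[OF continuous_on_subset[OF cont sphere_cball]]
    by (auto simp: compact_sphere sphere_eq_empty)
  have disk_max: "norm (f y) \<le> norm (f z0)" if "y \<in> cball 0 r" for y
  proof (rule maximum_modulus_frontier[of f "cball 0 r"])
    show "f holomorphic_on interior (cball 0 r)"
      by (rule holomorphic_on_subset[OF holo]) (use r in auto)
  qed (use cont z0_max that r in \<open>auto simp: frontier_cball\<close>)
  show thesis
  proof
    show "z0 \<noteq> 0" "norm z0 < 1" using z0 r by auto
    show "norm (f z) \<le> norm (f z0)" using disk_max r by simp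
    fix t :: real assume "0 \<le> t" "t \<le> 1"
    then have "norm (of_real t * z0) \<le> r"
      using z0 r by (simp add: norm_mult mult_left_le_one_le)
    then show "norm (f (of_real t * z0)) \<le> norm (f z0)" by (intro disk_max) simp
  qed
qed

lemma mult_norm_le_if_Re_cnj_mult_nonneg:
  fixes c d :: complex and a b K :: real
  assumes "a > 0" "b \<ge> 0" "norm (of_real a * c + of_real b * d) \<le> K"
    and "Re (cnj c * d) \<ge> 0"
  shows "a * norm c \<le> K"
proof -
  have "Re (cnj c * (of_real a * c + of_real b * d)) = a * norm c ^ 2 + b * Re (cnj c * d)"
    using cmod_power2[of c] by (simp add: algebra_simps power2_eq_square)
  then have "a * norm c ^ 2 \<le> Re (cnj c * (of_real a * c + of_real b * d))"
    using assms(2,4) by simp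
  also have "\<dots> \<le> norm (cnj c * (of_real a * c + of_real b * d))"
    by (rule complex_Re_le_cmod)
  also have "\<dots> \<le> norm c * K"
    using assms(3) by (simp add: norm_mult mult_left_mono)
  finally have "norm c * (a * norm c) \<le> norm c * K" by (simp add: power2_eq_square algebra_simps)
  moreover have "0 \<le> K"
    using assms(3) norm_ge_zero[of "of_real a * c + of_real b * d"] by linarith
  ultimately show ?thesis
    by (cases "c = 0") (simp_all add: mult_le_cancel_left_pos)
qed

lemma norm_le_div_if_norm_combination_le:
  fixes f :: "complex \<Rightarrow> complex" and a b K :: real
  assumes holo: "f holomorphic_on ball 0 1" and "a > 0" "b \<ge> 0"
    and bound: "\<And>z. norm z < 1 \<Longrightarrow>
                  norm (z * (of_real a * f z + of_real b * (z * deriv f z))) \<le> K * norm z"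
    and "norm z < 1"
  shows "norm (f z) \<le> K / a"
proof -
  obtain z0 where z0: "z0 \<noteq> 0" "norm z0 < 1" "norm (f z) \<le> norm (f z0)"
    and radial_max: "\<And>t. 0 \<le> t \<Longrightarrow> t \<le> 1 \<Longrightarrow> norm (f (of_real t * z0)) \<le> norm (f z0)"
    using exists_radial_max_modulus[OF holo \<open>norm z < 1\<close>] by blast
  have "f field_differentiable at z0"
    using holo z0(2) by (auto intro: holomorphic_on_imp_differentiable_at)
  then have "Re (cnj (f z0) * (z0 * deriv f z0)) \<ge> 0"
    using Re_cnj_mult_radial_deriv_nonneg radial_max by blast
  moreover have "norm (of_real a * f z0 + of_real b * (z0 * deriv f z0)) \<le> K"
    using bound[OF z0(2)] z0(1) by (simp add: norm_mult mult.commute)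
  ultimately have "a * norm (f z0) \<le> K"
    using mult_norm_le_if_Re_cnj_mult_nonneg assms(2,3) by blast
  then have "a * norm (f z) \<le> K"
    using mult_left_mono[OF z0(3), of a] \<open>a > 0\<close> by linarith
  then show ?thesis using \<open>a > 0\<close> by (simp add: field_simps)
qed

lemma norm_sub_center_le_if_norm_deriv_le:
  fixes f :: "complex \<Rightarrow> complex"
  assumes holo: "f holomorphic_on ball 0 1"
    and "\<And>z. z \<in> ball 0 1 \<Longrightarrow> norm (deriv f z) \<le> L" and "norm z < 1"
  shows "norm (f z - f 0) \<le> L * norm z"
proof -
  have "norm (f z - f 0) \<le> L * norm (z - 0)"
  proof (rule field_differentiable_bound[of "ball 0 1"])
    show "(f has_field_derivative deriv f x) (at x within ball 0 1)" if "x \<in> ball 0 1" for x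
      by (rule holomorphic_derivI[OF holo open_ball that])
  qed (use assms in auto)
  then show ?thesis by simp
qed

lemma subordinate_exp_if_norm_minus_one_lt_half:
  assumes holo: "p holomorphic_on ball 0 1" and "p 0 = 1"
    and near_one: "\<And>z. norm z < 1 \<Longrightarrow> norm (p z - 1) < 1/2"
  shows "p \<prec>\<^sub>D exp"
proof -
  have Re_pos: "Re (p z) > 0" if "norm z < 1" for z
    using abs_Re_le_cmod[of "p z - 1"] near_one[OF that] by simp
  show ?thesis unfolding subordinate_def
  proof (intro exI conjI ballI)
    show "(\<lambda>z. Ln (p z)) analytic_on ball 0 1"
      unfolding analytic_on_open[OF open_ball]
      by (rule holomorphic_on_Ln'[OF _ holo]) (use Re_pos in \<open>force simp: complex_nonpos_Reals_iff\<close>)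
    show "(\<lambda>z. Ln (p z)) ` ball 0 1 \<subseteq> ball 0 1"
    proof clarsimp
      fix z :: complex assume z: "norm z < 1"
      have "norm (Ln (1 + (p z - 1))) \<le> 2 * norm (p z - 1)"
        using norm_Ln_le near_one[OF z] by blast
      then show "norm (Ln (p z)) < 1" using near_one[OF z] by simp
    qed
    show "Ln (p 0) = 0" using \<open>p 0 = 1\<close> by simp
    fix z :: complex assume "z \<in> ball 0 1"
    then have "p z \<noteq> 0" using Re_pos[of z] by auto
    then show "p z = exp (Ln (p z))" by simp
  qed
qed

theorem theorem4p10:
  fixes \<alpha>1 \<alpha>2 :: real and p :: "complex \<Rightarrow> complex"
  assumes "\<alpha>1 > 0" and "\<alpha>2 > 0"
    and "\<alpha>1 - \<alpha>2 \<ge> exp 1 * (exp 1 - 1)"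
    and "p analytic_on ball 0 1" and "p 0 = 1"
    and "(\<lambda>z. 1 + of_real \<alpha>1 * z * deriv p z + of_real \<alpha>2 * z\<^sup>2 * deriv (deriv p) z) \<prec>\<^sub>D exp"
  shows "p \<prec>\<^sub>D exp"
proof -
  have holo: "p holomorphic_on ball 0 1" using assms(4) analytic_imp_holomorphic by blast
  have "norm (z * (of_real \<alpha>1 * deriv p z + of_real \<alpha>2 * (z * deriv (deriv p) z)))
          \<le> (exp 1 - 1) * norm z" if "norm z < 1" for z
    using norm_minus_one_le_if_subordinate_exp[OF assms(6) that]
    by (simp add: power2_eq_square algebra_simps)
  then have deriv_bound: "norm (deriv p z) \<le> (exp 1 - 1) / \<alpha>1" if "z \<in> ball 0 1" for z
    using norm_le_div_if_norm_combination_le[OF holomorphic_deriv[OF holo open_ball] assms(1)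
        less_imp_le[OF assms(2)]] that
    by simp
  have "2 * (exp 1 - 1) \<le> exp 1 * (exp 1 - 1 :: real)"
    using exp_ge_add_one_self[of "1::real"] by (intro mult_right_mono) auto
  then have half: "(exp 1 - 1) / \<alpha>1 \<le> 1/2" using assms(1-3) by (simp add: field_simps)
  show ?thesis
  proof (rule subordinate_exp_if_norm_minus_one_lt_half[OF holo assms(5)])
    fix z :: complex assume z: "norm z < 1"
    have "norm (p z - p 0) \<le> (exp 1 - 1) / \<alpha>1 * norm z"
      using norm_sub_center_le_if_norm_deriv_le[OF holo deriv_bound z] .
    also have "\<dots> \<le> 1/2 * norm z" by (rule mult_right_mono[OF half norm_ge_zero])
    also have "\<dots> < 1/2" using z by simp
    finally show "norm (p z - 1) < 1/2" using assms(5) by simp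
  qed
qed

end
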